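(* For every $k\ge0$, with $l=2^k$, $$f^{(2l-1)}(x,z)=x^{l}+\sum_{j=0}^{k}x^{\,l-2^j}z^{2^j}.$$
   Context: $\mathbb{F}=\mathrm{GF}(2)$, $R=\mathbb{F}[x,z]$, $|\cdot|$ is total degree. Let $(r_0,r_1,\ldots)$ be the binary sequence with $r_i=1$ if $i=2^j-1$ for some $j\ge 0$ and $r_i=0$ otherwise. For $n\ge1$ its inverse form is $R^{(1-n)}=\sum_{j=1-n}^{0}r_{-j}\,x^{j}z^{1-n-j}\in\mathbb{F}[x^{-1},z^{-1}]$. For a form $f\in R$ and such a form $G$, $\Delta(f;G)$ is the coefficient of $x^{|f|+|G|}z^0$ in $f\cdot G$ computed in $\mathbb{F}[x^{\pm1},z^{\pm1}]$ if $|f|+|G|\le 0$, and $0$ otherwise. Define forms recursively: $(f^{(0)},g^{(0)})=(x+z,z)$; for $k\ge0$ let $d_k=|g^{(k)}|-|f^{(k)}|$ and $\Delta_k=\Delta(f^{(k)};R^{(-1-k)})$, and set $(f^{(k+1)},g^{(k+1)})=(f^{(k)},zg^{(k)})$ if $\Delta_k=0$; $=(f^{(k)}+x^{-d_k}g^{(k)},\,zg^{(k)})$ if $\Delta_k=1$ and $d_k\le0$; $=(x^{d_k}f^{(k)}+g^{(k)},\,zf^{(k)})$ if $\Delta_k=1$ and $d_k>0$. *)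

theory Defs
  imports "HOL-Library.Poly_Mapping" "HOL-Library.Z2" "HOL-Library.Product_Plus"
begin

text \<open>Laurent polynomials over GF(2) in the variables x, z: finitely supported maps
  from exponent pairs (i, j) (standing for x^i z^j) to GF(2) = bit.
  The polynomial ring R = F[x,z] is the subring of those with nonnegative exponents.\<close>

type_synonym lpoly = "(int \<times> int) \<Rightarrow>\<^sub>0 bit"

definition mon :: "int \<Rightarrow> int \<Rightarrow> lpoly" where
  "mon i j = Poly_Mapping.single (i, j) 1"

abbreviation X :: lpoly where "X \<equiv> mon 1 0"
abbreviation Z :: lpoly where "Z \<equiv> mon 0 1"

definition tdeg :: "lpoly \<Rightarrow> int" where
  "tdeg p = (if p = 0 then 0 else Max ((\<lambda>(i, j). i + j) ` Poly_Mapping.keys p))"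

definition rseq :: "nat \<Rightarrow> bit" where
  "rseq i = (if \<exists>j. i = 2 ^ j - 1 then 1 else 0)"

text \<open>The inverse form R^(1-n) = sum_{j=1-n}^0 r_{-j} x^j z^{1-n-j}.\<close>
definition Rinv :: "nat \<Rightarrow> lpoly" where
  "Rinv n = (\<Sum>j\<in>{1 - int n..0}. Poly_Mapping.single (j, 1 - int n - j) (rseq (nat (- j))))"

definition Delta :: "lpoly \<Rightarrow> lpoly \<Rightarrow> bit" where
  "Delta f G = (if tdeg f + tdeg G \<le> 0 then Poly_Mapping.lookup (f * G) (tdeg f + tdeg G, 0) else 0)"

fun fg :: "nat \<Rightarrow> lpoly \<times> lpoly" where
  "fg 0 = (X + Z, Z)"
| "fg (Suc k) =
    (let (f, g) = fg k;
         d = tdeg g - tdeg f;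
         D = Delta f (Rinv (k + 2))
     in if D = 0 then (f, Z * g)
        else if d \<le> 0 then (f + mon (- d) 0 * g, Z * g)
        else (mon d 0 * f + g, Z * f))"

end

theory Submission
  imports Defs "HOL-Computational_Algebra.Formal_Power_Series"
begin

text \<open>
  The pairs produced by the iteration are \<open>(F (m+1), z F m)\<close> after \<open>2m\<close> steps and
  \<open>(F (m+1), z\<^sup>2 F m)\<close> after \<open>2m+1\<close> steps, where \<open>F 0 = 1\<close>, \<open>F 1 = x + z\<close> and
  \<open>F (n+2) = x F (n+1) + z\<^sup>2 F n\<close>. The form \<open>F n\<close> is homogeneous of degree \<open>n\<close>, so each
  discrepancy is a coefficient of \<open>P n \<cdot> u\<close>, where \<open>P n = F n (1, z)\<close> and \<open>u = \<Sum> z^(2^j)\<close>.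
  Over GF(2) one has \<open>u\<^sup>2 = u + z\<close>, so \<open>\<lambda> = u + z\<close> satisfies \<open>\<lambda>\<^sup>2 = \<lambda> + z\<^sup>2\<close>, the characteristic
  equation of the recurrence of \<open>P\<close>. Hence \<open>P n \<cdot> u\<close> agrees with \<open>\<lambda>^n \<cdot> u = z^(2n+1) + \<dots>\<close>
  up to a polynomial of degree below \<open>2n\<close>, and the discrepancies alternate \<open>0, 1\<close>, which
  forces the pattern above. Finally \<open>F n = U (n+1) + z U n\<close> for the sequence \<open>U\<close> with
  \<open>U 0 = 0\<close>, \<open>U 1 = 1\<close> and the same recurrence; in characteristic two it obeys the doubling
  formulas \<open>U (2n) = x U(n)\<^sup>2\<close>, \<open>U (2n+1) = U(n+1)\<^sup>2 + z\<^sup>2 U(n)\<^sup>2\<close>, which give \<open>F (2^k)\<close>.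
\<close>

unbundle fps_syntax

lemma bit_add_self [simp]: "(a :: bit) + a = 0"
  by (cases a) simp_all

lemma poly_mapping_bit_add_self [simp]: "(p :: 'a \<Rightarrow>\<^sub>0 bit) + p = 0"
  by (rule poly_mapping_eqI) (simp add: lookup_add)

lemma fps_bit_add_self [simp]: "(f :: bit fps) + f = 0"
  by (rule fps_ext) (simp only: fps_add_nth bit_add_self fps_zero_nth)

lemma poly_mapping_bit_two: "(2 :: 'a::comm_monoid_add \<Rightarrow>\<^sub>0 bit) = 0"
  by (metis poly_mapping_bit_add_self one_add_one)

lemma fps_bit_two: "(2 :: bit fps) = 0"
  by (metis fps_bit_add_self one_add_one)

lemma power2_add_char2:
  fixes a b :: "'a::comm_semiring_1"
  assumes "\<And>x::'a. x + x = 0"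
  shows "(a + b)^2 = a^2 + b^2"
proof -
  have "(a + b)^2 = a^2 + b^2 + (a * b + a * b)"
    by (simp add: power2_eq_square algebra_simps)
  then show ?thesis using assms by simp
qed

lemma power2_sum_char2:
  fixes f :: "'b \<Rightarrow> 'a::comm_semiring_1"
  assumes "\<And>x::'a. x + x = 0"
  shows "(\<Sum>i\<in>A. f i)^2 = (\<Sum>i\<in>A. (f i)^2)"
  by (induction A rule: infinite_finite_induct) (simp_all add: power2_add_char2 assms)

lemma lookup_single_times:
  fixes p :: "'k::ab_group_add \<Rightarrow>\<^sub>0 'a::comm_semiring_1"
  shows "Poly_Mapping.lookup (Poly_Mapping.single k c * p) x = c * Poly_Mapping.lookup p (x - k)"
proof -
  have "Poly_Mapping.lookup (Poly_Mapping.single k c * p) x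
      = c * Sum_any (\<lambda>q. Poly_Mapping.lookup p q when x = k + q)"
    by (simp add: lookup_mult lookup_single when_mult)
  also have "Sum_any (\<lambda>q. Poly_Mapping.lookup p q when x = k + q) = Poly_Mapping.lookup p (x - k)"
  proof -
    have "x = k + q \<longleftrightarrow> q = x - k" for q
      by (auto simp: algebra_simps)
    then show ?thesis
      by simp
  qed
  finally show ?thesis .
qed

lemma lookup_mon: "Poly_Mapping.lookup (mon a b) (i, j) = (if i = a \<and> j = b then 1 else 0)"
  by (auto simp: mon_def lookup_single when_def)

lemma lookup_mon_times: "Poly_Mapping.lookup (mon a b * p) (i, j) = Poly_Mapping.lookup p (i - a, j - b)"
  by (simp add: mon_def lookup_single_times)

lemma mon_mult: "mon a b * mon c d = mon (a + c) (b + d)"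
  by (simp add: mon_def mult_single)

lemma one_eq_mon: "(1 :: lpoly) = mon 0 0"
  by (simp add: mon_def flip: zero_prod_def)

lemma X_power: "X ^ n = mon (int n) 0"
  by (induction n) (simp_all add: one_eq_mon mon_mult)

lemma mon_power2: "(mon a b)^2 = mon (2 * a) (2 * b)"
  by (simp add: power2_eq_square mon_mult)

lemma fps_bit_square_nth: "((f :: bit fps) * f) $ n = (if even n then f $ (n div 2) else 0)"
proof -
  define g where "g i = f $ i * f $ (n - i)" for i
  define A where "A = {i \<in> {0..n}. 2 * i < n}"
  define M where "M = {i \<in> {0..n}. 2 * i = n}"
  define B where "B = {i \<in> {0..n}. 2 * i > n}"
  have "(f * f) $ n = sum g {0..n}"
    by (simp add: fps_mult_nth g_def)
  also have "{0..n} = A \<union> (M \<union> B)"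
    by (auto simp: A_def M_def B_def)
  also have "sum g \<dots> = sum g A + sum g (M \<union> B)"
    by (rule sum.union_disjoint) (auto simp: A_def M_def B_def)
  also have "sum g (M \<union> B) = sum g M + sum g B"
    by (rule sum.union_disjoint) (auto simp: M_def B_def)
  also have "sum g B = sum g A"
    by (rule sum.reindex_bij_witness[where i="\<lambda>i. n - i" and j="\<lambda>i. n - i"])
      (auto simp: A_def B_def g_def mult.commute)
  also have "sum g A + (sum g M + sum g A) = sum g M"
    by (metis add.left_commute add.right_neutral bit_add_self)
  also have "sum g M = (if even n then f $ (n div 2) else 0)"
  proof (cases "even n")
    case True
    then have "M = {n div 2}" and "n - n div 2 = n div 2"
      by (auto simp: M_def)
    then show ?thesis
      using True by (simp add: g_def)
  next
    case False
    then have "M = {}"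
      by (auto simp: M_def)
    then show ?thesis
      using False by simp
  qed
  finally show ?thesis .
qed

definition pow2_fps :: "bit fps" where
  "pow2_fps = Abs_fps (\<lambda>n. if \<exists>j. n = 2 ^ j then 1 else 0)"

lemma pow2_fps_nth: "pow2_fps $ n = (if \<exists>j. n = 2 ^ j then 1 else 0)"
  by (simp add: pow2_fps_def)

lemma double_eq_power2_iff: "(\<exists>j. 2 * m = (2::nat) ^ j) \<longleftrightarrow> (\<exists>j. m = 2 ^ j)"
proof
  assume "\<exists>j. 2 * m = (2::nat) ^ j"
  then obtain j where j: "2 * m = (2::nat) ^ j" ..
  then have "j \<noteq> 0"
    by (metis odd_one power_0 dvd_triv_left)
  with j show "\<exists>j. m = 2 ^ j"
    by (metis not0_implies_Suc nonzero_mult_div_cancel_left power_Suc zero_neq_numeral)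
qed (metis power_Suc)

lemma odd_eq_power2_iff: "odd n \<Longrightarrow> (\<exists>j. n = (2::nat) ^ j) \<longleftrightarrow> n = 1"
  by (metis dvd_power power_0 zero_less_iff_neq_zero)

lemma pow2_fps_square: "pow2_fps ^ 2 = pow2_fps + fps_X"
proof (rule fps_ext)
  fix n
  show "(pow2_fps ^ 2) $ n = (pow2_fps + fps_X) $ n"
  proof (cases "even n")
    case True
    then obtain m where "n = 2 * m" ..
    then show ?thesis
      by (simp add: power2_eq_square fps_bit_square_nth pow2_fps_nth double_eq_power2_iff)
  next
    case False
    then show ?thesis
      by (auto simp: power2_eq_square fps_bit_square_nth pow2_fps_nth odd_eq_power2_iff)
  qed
qed

lemma pow2_fps_nth_power2: "pow2_fps $ (2 ^ j) = 1"
  by (auto simp: pow2_fps_nth)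

lemma pow2_fps_nth_0: "pow2_fps $ 0 = 0"
  by (simp add: pow2_fps_nth)

lemma subdegree_pow2_fps: "subdegree pow2_fps = 1"
  by (rule subdegreeI) (simp_all add: pow2_fps_nth_power2[of 0, simplified] pow2_fps_nth_0)

lemma pow2_fps_nth_Suc: "pow2_fps $ Suc k = rseq k"
proof -
  have "(\<exists>j. Suc k = 2 ^ j) \<longleftrightarrow> (\<exists>j. k = 2 ^ j - 1)"
    by (metis Suc_pred' diff_Suc_1 zero_less_power zero_less_numeral)
  then show ?thesis
    by (simp add: pow2_fps_nth rseq_def)
qed

fun linrec :: "'a::comm_semiring_1 \<Rightarrow> 'a \<Rightarrow> 'a \<Rightarrow> 'a \<Rightarrow> nat \<Rightarrow> 'a" where
  "linrec a b s0 s1 0 = s0"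
| "linrec a b s0 s1 (Suc 0) = s1"
| "linrec a b s0 s1 (Suc (Suc n)) = a * linrec a b s0 s1 (Suc n) + b * linrec a b s0 s1 n"

lemma linrec_add:
  "linrec a b (s0 + t0) (s1 + t1) n = linrec a b s0 s1 n + linrec a b t0 t1 n"
  by (induction n rule: induct_nat_012) (simp_all add: algebra_simps)

lemma linrec_mult_right:
  "linrec a b (s0 * c) (s1 * c) n = linrec a b s0 s1 n * c"
  by (induction n rule: induct_nat_012) (simp_all add: algebra_simps)

lemma linrec_Suc:
  "linrec a b s0 s1 (Suc n) = linrec a b s1 (a * s1 + b * s0) n"
  by (induction n rule: induct_nat_012) simp_all

lemma linrec_power:
  assumes "x ^ 2 = a * x + b"
  shows "linrec a b 1 x n = x ^ n"
proof (induction n rule: induct_nat_012)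
  case (ge2 n)
  then have "linrec a b 1 x (Suc (Suc n)) = x ^ n * (a * x + b)"
    by (simp add: algebra_simps)
  also have "\<dots> = x ^ Suc (Suc n)"
    by (simp flip: assms add: power_add[of x n 2, simplified])
  finally show ?case .
qed simp_all

text \<open>\<open>P n\<close> is the dehomogenisation \<open>F n (1, z)\<close> of the form \<open>F n\<close> below (see \<open>lookup_F\<close>).\<close>

abbreviation P :: "nat \<Rightarrow> bit fps" where
  "P \<equiv> linrec 1 (fps_X ^ 2) 1 (1 + fps_X)"

abbreviation Q :: "nat \<Rightarrow> bit fps" where
  "Q \<equiv> linrec 1 (fps_X ^ 2) 0 fps_X"

lemma P_nth_0: "P n $ 0 = 1"
  by (induction n rule: induct_nat_012) (simp_all add: fps_X_power_mult_nth)

text \<open>A root of \<open>t\<^sup>2 = t + z\<^sup>2\<close>, the characteristic equation of the recurrence of \<open>P\<close> and \<open>Q\<close>.\<close>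

definition lam :: "bit fps" where
  "lam = pow2_fps + fps_X"

lemma lam_power2: "lam ^ 2 = 1 * lam + fps_X ^ 2"
  by (simp add: lam_def power2_add_char2 pow2_fps_square)

lemma P_times_pow2_fps: "P n * pow2_fps = Q n + lam ^ n * pow2_fps"
proof -
  have "fps_X + lam * pow2_fps = (1 + fps_X) * pow2_fps"
  proof -
    have "lam * pow2_fps = pow2_fps ^ 2 + fps_X * pow2_fps"
      by (simp add: lam_def power2_eq_square algebra_simps)
    then show ?thesis
      by (simp add: pow2_fps_square algebra_simps fps_bit_two)
  qed
  then have "P n * pow2_fps = linrec 1 (fps_X ^ 2) (0 + 1 * pow2_fps) (fps_X + lam * pow2_fps) n"
    by (simp flip: linrec_mult_right)
  also have "\<dots> = Q n + lam ^ n * pow2_fps"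
    by (simp only: linrec_add linrec_mult_right linrec_power[OF lam_power2])
  finally show ?thesis .
qed

lemma Q_nth_eq_0: "2 * n \<le> i \<Longrightarrow> Q n $ i = 0"
proof (induction n arbitrary: i rule: induct_nat_012)
  case (ge2 n)
  have "(fps_X ^ 2 * Q n) $ i = 0"
    using ge2 by (simp add: fps_X_power_mult_nth)
  then show ?case
    using ge2 by simp
qed simp_all

lemma subdegree_lam: "subdegree lam = 2"
proof (rule subdegreeI)
  show "lam $ 2 \<noteq> 0"
    by (simp add: lam_def pow2_fps_nth_power2[of 1, simplified])
  show "lam $ i = 0" if "i < 2" for i
    using that by (auto simp: lam_def less_2_cases_iff pow2_fps_nth_0
        pow2_fps_nth_power2[of 0, simplified])
qed

lemma P_times_pow2_fps_nth:
  "(P n * pow2_fps) $ (2 * n) = 0" "(P n * pow2_fps) $ (2 * n + 1) = 1"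
proof -
  have "lam \<noteq> 0" "pow2_fps \<noteq> 0"
    using subdegree_lam subdegree_pow2_fps by auto
  then have nz: "lam ^ n * pow2_fps \<noteq> 0"
    and sd: "subdegree (lam ^ n * pow2_fps) = 2 * n + 1"
    by (simp_all add: subdegree_lam subdegree_pow2_fps)
  have "(lam ^ n * pow2_fps) $ (2 * n) = 0"
    by (rule nth_less_subdegree_zero) (simp add: sd)
  then show "(P n * pow2_fps) $ (2 * n) = 0"
    by (simp add: P_times_pow2_fps Q_nth_eq_0)
  have "(lam ^ n * pow2_fps) $ (2 * n + 1) = 1"
    using nth_subdegree_nonzero[OF nz] by (simp add: sd)
  then show "(P n * pow2_fps) $ (2 * n + 1) = 1"
    by (simp add: P_times_pow2_fps Q_nth_eq_0)
qed

abbreviation F :: "nat \<Rightarrow> lpoly" where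
  "F \<equiv> linrec X (Z * Z) 1 (X + Z)"

lemma ZZ_eq_mon: "Z * Z = mon 0 2"
  by (simp add: mon_mult)

lemma lookup_F:
  "Poly_Mapping.lookup (F n) (i, j) = (if j < 0 \<or> i + j \<noteq> int n then 0 else P n $ nat j)"
proof (induction n arbitrary: i j rule: induct_nat_012)
  case 0
  show ?case
    by (auto simp: one_eq_mon lookup_mon)
next
  case 1
  show ?case
    by (auto simp: lookup_add lookup_mon nat_eq_iff)
next
  case (ge2 n)
  have "Poly_Mapping.lookup (F (Suc (Suc n))) (i, j) =
        Poly_Mapping.lookup (F (Suc n)) (i - 1, j) + Poly_Mapping.lookup (F n) (i, j - 2)"
    by (simp add: lookup_add ZZ_eq_mon lookup_mon_times)
  also have "\<dots> = (if j < 0 \<or> i + j \<noteq> int (Suc (Suc n)) then 0 else P (Suc (Suc n)) $ nat j)"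
  proof (cases "j < 0 \<or> i + j \<noteq> int (Suc (Suc n))")
    case True
    then show ?thesis
      by (auto simp: ge2)
  next
    case False
    then show ?thesis
      by (cases "j < 2") (auto simp: ge2 fps_X_power_mult_nth nat_diff_distrib)
  qed
  finally show ?case .
qed

lemma tdeg_eqI:
  assumes "\<And>i j. Poly_Mapping.lookup p (i, j) \<noteq> 0 \<Longrightarrow> i + j = d"
    and "Poly_Mapping.lookup p (i0, j0) \<noteq> 0"
  shows "tdeg p = d"
proof -
  have "(\<lambda>(i, j). i + j) ` Poly_Mapping.keys p = {d}"
    using assms by (force simp: in_keys_iff)
  moreover have "p \<noteq> 0"
    using assms(2) by auto
  ultimately show ?thesis
    by (simp add: tdeg_def)
qed

lemma tdeg_F: "tdeg (F n) = int n"
  by (rule tdeg_eqI[of _ _ "int n" 0]) (auto simp: lookup_F P_nth_0 split: if_splits)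

lemma tdeg_ZZ_F: "tdeg (Z * (Z * F n)) = int n + 2"
  by (rule tdeg_eqI[of _ _ "int n" 2])
    (auto simp: lookup_F P_nth_0 lookup_mon_times split: if_splits)

lemma lookup_Rinv: "Poly_Mapping.lookup (Rinv N) (i, j) =
   (if 1 - int N \<le> i \<and> i \<le> 0 \<and> i + j = 1 - int N then rseq (nat (- i)) else 0)"
proof -
  have "Poly_Mapping.lookup (Rinv N) (i, j) =
      (\<Sum>i'\<in>{1 - int N..0}. if i' = i \<and> i + j = 1 - int N then rseq (nat (- i')) else 0)"
    unfolding Rinv_def lookup_sum
    by (rule sum.cong) (auto simp: lookup_single when_def)
  then show ?thesis
    by auto
qed

lemma rseq_0: "rseq 0 = 1"
  by (auto simp: rseq_def intro: exI[of _ 0])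

lemma tdeg_Rinv: "N \<ge> 1 \<Longrightarrow> tdeg (Rinv N) = 1 - int N"
  by (rule tdeg_eqI[of _ _ 0 "1 - int N"]) (auto simp: lookup_Rinv rseq_0 split: if_splits)

lemma lookup_F_times_Rinv:
  "Poly_Mapping.lookup (F n * Rinv N) (int n + 1 - int N, 0) = (P n * pow2_fps) $ N"
proof -
  have "Poly_Mapping.lookup (F n * Rinv N) (int n + 1 - int N, 0) =
      (\<Sum>j\<in>{1 - int N..0}. rseq (nat (- j)) * P n $ nat (j - (1 - int N)))"
    unfolding Rinv_def sum_distrib_left lookup_sum
    by (rule sum.cong) (auto simp: mult.commute[of "F n"] lookup_single_times lookup_F)
  also have "\<dots> = (\<Sum>i<N. P n $ i * pow2_fps $ (N - i))"
  proof (rule sum.reindex_bij_witness[where i="\<lambda>i. int i + 1 - int N" and j="\<lambda>j. nat (j + int N - 1)"])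
    fix j assume "j \<in> {1 - int N..0}"
    then have "N - nat (j + int N - 1) = Suc (nat (- j))"
      and "nat (j - (1 - int N)) = nat (j + int N - 1)"
      by auto
    then show "P n $ nat (j + int N - 1) * pow2_fps $ (N - nat (j + int N - 1)) =
        rseq (nat (- j)) * P n $ nat (j - (1 - int N))"
      by (simp add: pow2_fps_nth_Suc mult.commute)
  qed auto
  also have "\<dots> = (P n * pow2_fps) $ N"
    by (simp add: fps_mult_nth atLeast0AtMost lessThan_Suc_atMost[symmetric] pow2_fps_nth_0)
  finally show ?thesis .
qed

lemma Delta_F_Rinv:
  assumes "n < N"
  shows "Delta (F n) (Rinv N) = (P n * pow2_fps) $ N"
proof -
  have "tdeg (F n) + tdeg (Rinv N) = int n + 1 - int N"
    using assms by (simp add: tdeg_F tdeg_Rinv)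
  then show ?thesis
    using assms by (simp add: Delta_def lookup_F_times_Rinv)
qed

lemma fg_odd_step:
  assumes "fg (2 * m) = (F (Suc m), Z * F m)"
  shows "fg (Suc (2 * m)) = (F (Suc m), Z * (Z * F m))"
proof -
  have "Delta (F (Suc m)) (Rinv (2 * m + 2)) = 0"
    using Delta_F_Rinv[of "Suc m" "2 * Suc m"] P_times_pow2_fps_nth(1)[of "Suc m"] by simp
  then show ?thesis
    using assms by (simp add: Let_def)
qed

lemma fg_even_step:
  assumes "fg (Suc (2 * m)) = (F (Suc m), Z * (Z * F m))"
  shows "fg (2 * Suc m) = (F (Suc (Suc m)), Z * F (Suc m))"
proof -
  have "Delta (F (Suc m)) (Rinv (Suc (2 * m) + 2)) = 1"
    using Delta_F_Rinv[of "Suc m" "2 * Suc m + 1"] P_times_pow2_fps_nth(2)[of "Suc m"] by simp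
  moreover have "tdeg (Z * (Z * F m)) - tdeg (F (Suc m)) = 1"
    by (simp add: tdeg_ZZ_F tdeg_F)
  ultimately have "fg (Suc (Suc (2 * m))) = (X * F (Suc m) + Z * (Z * F m), Z * F (Suc m))"
    using assms by (simp only: fg.simps Let_def case_prod_conv) simp
  then show ?thesis
    by (simp add: mult.assoc)
qed

lemma fg_eq_F:
  "fg (2 * m) = (F (Suc m), Z * F m) \<and> fg (Suc (2 * m)) = (F (Suc m), Z * (Z * F m))"
proof (induction m)
  case 0
  then show ?case
    using fg_odd_step[of 0] by simp
next
  case (Suc m)
  then show ?case
    using fg_even_step fg_odd_step by blast
qed

abbreviation U :: "nat \<Rightarrow> lpoly" where
  "U \<equiv> linrec X (Z * Z) 0 1"

lemma F_eq_U: "F n = U (Suc n) + Z * U n"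
proof -
  have "U (Suc n) = linrec X (Z * Z) 1 X n"
    by (simp add: linrec_Suc)
  moreover have "Z * U n = linrec X (Z * Z) 0 Z n"
    using linrec_mult_right[of X "Z * Z" 0 Z 1 n] by (simp add: mult.commute)
  ultimately show ?thesis
    using linrec_add[of X "Z * Z" 1 0 X Z n] by simp
qed

lemma U_double:
  "U (2 * n) = X * (U n)^2 \<and> U (Suc (2 * n)) = (U (Suc n))^2 + Z * Z * (U n)^2"
proof (induction n)
  case (Suc n)
  define a b where "a = U (Suc n)" and "b = U n"
  have even: "U (2 * Suc n) = X * a^2"
  proof -
    have "U (2 * Suc n) = X * (a^2 + Z * Z * b^2) + Z * Z * (X * b^2)"
      using Suc by (simp add: a_def b_def)
    also have "\<dots> = X * a^2"
      by (simp add: algebra_simps poly_mapping_bit_two)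
    finally show ?thesis .
  qed
  have "U (Suc (2 * Suc n)) = X * (X * a^2) + Z * Z * (a^2 + Z * Z * b^2)"
    using Suc even by (simp add: a_def b_def)
  also have "\<dots> = (X * a + Z * Z * b)^2 + Z * Z * a^2"
    by (simp add: algebra_simps power2_eq_square poly_mapping_bit_two)
  also have "X * a + Z * Z * b = U (Suc (Suc n))"
    by (simp add: a_def b_def)
  finally show ?case
    using even by (simp add: a_def)
qed simp

lemma U_power2: "U (2 ^ k) = X ^ (2 ^ k - 1)"
proof (induction k)
  case (Suc k)
  have "U (2 ^ Suc k) = X * (X ^ (2 ^ k - 1))^2"
    using U_double[of "2 ^ k"] Suc by simp
  also have "\<dots> = X ^ (1 + (2 ^ k - 1) * 2)"
    by (simp add: power_mult power_add)
  also have "1 + (2 ^ k - 1) * 2 = (2::nat) ^ Suc k - 1"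
    using one_le_power[of "2::nat" k] by (simp add: diff_mult_distrib; linarith)
  finally show ?case .
qed simp

lemma U_power2_Suc:
  "U (Suc (2 ^ k)) = mon (2 ^ k) 0 + (\<Sum>j\<in>{1..k}. mon (2 ^ k - 2 ^ j) (2 ^ j))"
proof (induction k)
  case (Suc k)
  have "U (Suc (2 ^ Suc k)) = (U (Suc (2 ^ k)))^2 + Z * Z * (X ^ (2 ^ k - 1))^2"
    using U_double[of "2 ^ k"] U_power2[of k] by simp
  also have "(U (Suc (2 ^ k)))^2 =
      mon (2 ^ Suc k) 0 + (\<Sum>j\<in>{1..k}. mon (2 ^ Suc k - 2 ^ Suc j) (2 ^ Suc j))"
    unfolding Suc power2_add_char2[OF poly_mapping_bit_add_self]
      power2_sum_char2[OF poly_mapping_bit_add_self] mon_power2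
    by (simp add: algebra_simps)
  also have "Z * Z * (X ^ (2 ^ k - 1))^2 = mon (2 ^ Suc k - 2 ^ 1) (2 ^ 1)"
    using one_le_power[of "2::nat" k] by (simp add: X_power mon_power2 ZZ_eq_mon mon_mult)
  finally have "U (Suc (2 ^ Suc k)) = mon (2 ^ Suc k) 0 +
      (\<Sum>j\<in>{1..k}. mon (2 ^ Suc k - 2 ^ Suc j) (2 ^ Suc j)) + mon (2 ^ Suc k - 2 ^ 1) (2 ^ 1)" .
  moreover have "(\<Sum>j\<in>{1..Suc k}. m j) = m 1 + (\<Sum>j\<in>{1..k}. m (Suc j))" for m :: "nat \<Rightarrow> lpoly"
    using sum.atLeast_Suc_atMost[of 1 "Suc k" m] sum.shift_bounds_cl_Suc_ivl[of m 1 k] by simp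
  ultimately show ?case
    by (simp only: ac_simps)
qed simp

theorem mainTheorem13:
  fixes k :: nat
  defines "l \<equiv> (2::nat) ^ k"
  shows "fst (fg (2 * l - 1)) =
           mon (int l) 0 + (\<Sum>j\<in>{0..k}. mon (int (l - 2 ^ j)) (int (2 ^ j)))"
proof -
  have "l \<ge> 1"
    by (simp add: l_def)
  then have l: "2 * l - 1 = Suc (2 * (l - 1))" "Suc (l - 1) = l"
    by simp_all
  have "fst (fg (2 * l - 1)) = F l"
    unfolding l(1) conjunct2[OF fg_eq_F] fst_conv l(2) ..
  also have "\<dots> = U (Suc l) + Z * U l"
    by (rule F_eq_U)
  also have "Z * U l = mon (int l - 1) 1"
    using \<open>l \<ge> 1\<close> unfolding l_def U_power2 by (simp add: X_power mon_mult)
  also have "U (Suc l) = mon (int l) 0 + (\<Sum>j\<in>{1..k}. mon (2 ^ k - 2 ^ j) (2 ^ j))"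
    unfolding l_def U_power2_Suc by simp
  also have "\<dots> + mon (int l - 1) 1 =
      mon (int l) 0 + (mon (int l - 1) 1 + (\<Sum>j\<in>{1..k}. mon (2 ^ k - 2 ^ j) (2 ^ j)))"
    by (simp only: ac_simps)
  also have "mon (int l - 1) 1 + (\<Sum>j\<in>{1..k}. mon (2 ^ k - 2 ^ j) (2 ^ j)) =
      (\<Sum>j\<in>{0..k}. mon (int (l - 2 ^ j)) (int (2 ^ j)))"
    by (simp add: sum.atLeast_Suc_atMost l_def power_increasing sum.shift_bounds_cl_Suc_ivl)
  finally show ?thesis .
qed

end
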